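(* Consider the error system with adaptive control $u_{\mathrm{adapt}}=-\hat W^\top\beta(e)$ and static update law $\hat W(t)=K\beta(e(t))B^\top Pe(t)$, where $K=\alpha K_{\mathrm b}$ with $\alpha>0$ and $0<K_{\mathrm b}\in\mathrm S^{n_\beta}$, and $0<P,Q\in\mathrm S^n$ satisfy $Q=-(A^\top P+PA)$. Assume $\mathscr b:=\inf_{x\in\mathbb R^n}\beta(x)^\top K_{\mathrm b}\beta(x)>0$ and $|\eta(t)|\le\eta^\star$ for all $t\ge0$. Let $\gamma\in[0,1)$ and $\mu>0$, and define $$r_{\mathrm e}=\sqrt{\frac{\lambda_{\max}(P)}{g(\alpha\mathscr b\gamma,Q,PB)\,\lambda_{\min}(P)}}\;\sqrt{\frac{W^\top K_{\mathrm b}^{-1}W+\frac{{\eta^\star}^2}{\mathscr b(1-\gamma)}}{\alpha}+\mu}.$$ Then for every closed-loop solution there exists $T_{\mathrm e}\ge0$ such that $\|e(t)\|\le r_{\mathrm e}$ for all $t\ge T_{\mathrm e}$.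
   Context: Error system: $\dot e=Ae+B(u_{\mathrm{adapt}}+W^\top\beta(e)+\eta)$ with $e(t)\in\mathbb R^n$, $A\in\mathbb R^{n\times n}$ Hurwitz, $B\in\mathbb R^n$, $\beta:\mathbb R^n\to\mathbb R^{n_\beta}$ known, $W\in\mathbb R^{n_\beta}$ unknown constant, $\eta(t)\in\mathbb R$; Assumption 1: there is a non-decreasing $\alpha_\beta:[0,\infty)\to[0,\infty)$ with $\|\beta(x)\|\le\alpha_\beta(\|x\|)$ for all $x$. Closed-loop solutions are assumed to exist on $[0,\infty)$. $\mathrm S^k$: real symmetric $k\times k$ matrices. $g(\phi,Q,v)=\lambda_{\min}(Q+\phi\,vv^\top)$. *)

theory Defs
  imports "HOL-Analysis.Analysis"
begin

definition sym_mat :: "real^'n^'n \<Rightarrow> bool" where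
  "sym_mat M \<longleftrightarrow> transpose M = M"

definition pos_def :: "real^'n^'n \<Rightarrow> bool" where
  "pos_def M \<longleftrightarrow> sym_mat M \<and> (\<forall>x. x \<noteq> 0 \<longrightarrow> x \<bullet> (M *v x) > 0)"

text \<open>Real eigenvalues of a real square matrix, and the extreme ones
  (used only for symmetric matrices, where all eigenvalues are real).\<close>
definition real_eigenvalues :: "real^'n^'n \<Rightarrow> real set" where
  "real_eigenvalues M = {l. \<exists>v. v \<noteq> 0 \<and> M *v v = l *\<^sub>R v}"

definition lambda_min :: "real^'n^'n \<Rightarrow> real" where
  "lambda_min M = Min (real_eigenvalues M)"

definition lambda_max :: "real^'n^'n \<Rightarrow> real" where
  "lambda_max M = Max (real_eigenvalues M)"

definition hurwitz :: "real^'n^'n \<Rightarrow> bool" where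
  "hurwitz A \<longleftrightarrow> (\<forall>(l::complex) (v::complex^'n). v \<noteq> 0 \<and>
      (\<chi> i j. complex_of_real (A $ i $ j)) *v v = l *s v \<longrightarrow> Re l < 0)"

definition outer :: "real^'n \<Rightarrow> real^'n \<Rightarrow> real^'n^'n" where
  "outer v w = (\<chi> i j. v $ i * w $ j)"

definition gfun :: "real \<Rightarrow> real^'n^'n \<Rightarrow> real^'n \<Rightarrow> real" where
  "gfun phi Q v = lambda_min (Q + phi *\<^sub>R outer v v)"

end

theory Submission
  imports Defs
begin

text \<open>The quadratic form \<open>V = e\<^sup>T P e\<close> is a Lyapunov function. With \<open>s = B\<^sup>T P e\<close> and
  \<open>k = \<beta>(e)\<^sup>T K\<^sub>b \<beta>(e) \<ge> b\<close>, the static update law turns the control into \<open>u = -\<alpha> k s\<close>, so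
  \<open>V' = -e\<^sup>T Q e - 2\<alpha>k s\<^sup>2 + 2s W\<^sup>T\<beta>(e) + 2s\<eta>\<close>. The damping \<open>2\<alpha>k s\<^sup>2\<close> is split three ways:
  \<open>\<alpha>k s\<^sup>2\<close> absorbs the parameter error by completing the square in the \<open>K\<^sub>b\<close>-norm,
  \<open>\<alpha>(1-\<gamma>)k s\<^sup>2\<close> absorbs the disturbance by Young's inequality, and the rest dominates
  \<open>\<alpha>b\<gamma> s\<^sup>2 = \<alpha>b\<gamma> (e\<^sup>T P B)\<^sup>2\<close>, which is added to \<open>e\<^sup>T Q e\<close> to get the rate
  \<open>g = g(\<alpha>b\<gamma>, Q, PB)\<close>. Hence \<open>V' \<le> -g \<parallel>e\<parallel>\<^sup>2 + D\<close>, so \<open>V\<close> decreases at rate \<open>\<mu>\<close> above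
  the level \<open>\<lambda>\<^sub>m\<^sub>a\<^sub>x(P) (D + \<mu>) / g\<close>, enters this sublevel set in finite time and stays there;
  comparing \<open>V\<close> with \<open>\<lambda>\<^sub>m\<^sub>i\<^sub>n(P) \<parallel>e\<parallel>\<^sup>2\<close> gives the radius.\<close>

lemma sym_mat_inner_commute:
  assumes "sym_mat M"
  shows "x \<bullet> (M *v y) = (M *v x) \<bullet> (y::real^'n)"
proof -
  have "x \<bullet> (M *v y) = (x v* M) \<bullet> y"
    by (simp add: dot_lmul_matrix)
  also have "x v* M = transpose M *v x"
    by simp
  also have "\<dots> = M *v x"
    using assms by (simp add: sym_mat_def)
  finally show ?thesis .
qed

lemma sym_mat_uminus: "sym_mat M \<Longrightarrow> sym_mat (- M :: real^'n^'n)"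
  by (simp add: sym_mat_def transpose_def vec_eq_iff)

lemma matrix_vector_mult_uminus: "(- M) *v x = - (M *v (x::real^'n) :: real^'m)"
  using matrix_vector_mult_diff_rdistrib[of 0 M x] by simp

lemma real_eigenvalues_uminus: "real_eigenvalues (- M) = uminus ` real_eigenvalues (M::real^'n^'n)"
proof -
  have "(- M) *v v = l *\<^sub>R v \<longleftrightarrow> M *v v = (- l) *\<^sub>R v" for v l
    by (metis matrix_vector_mult_uminus minus_minus scaleR_minus_left)
  then have "l \<in> real_eigenvalues (- M) \<longleftrightarrow> - l \<in> real_eigenvalues M" for l
    by (simp add: real_eigenvalues_def)
  moreover have "uminus ` S = {l. - l \<in> S}" for S :: "real set"
    by (auto intro: image_eqI[of _ uminus "- _"])
  ultimately show ?thesis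
    by blast
qed

text \<open>Eigenvectors of distinct eigenvalues of a symmetric matrix are orthogonal, hence
  independent, so there are at most finitely many eigenvalues.\<close>
lemma finite_real_eigenvalues:
  assumes "sym_mat M"
  shows "finite (real_eigenvalues (M::real^'n^'n))"
proof -
  define f where "f l = (SOME v. v \<noteq> 0 \<and> M *v v = l *\<^sub>R v)" for l
  have f: "f l \<noteq> 0" "M *v f l = l *\<^sub>R f l" if "l \<in> real_eigenvalues M" for l
    using that someI_ex[of "\<lambda>v. v \<noteq> 0 \<and> M *v v = l *\<^sub>R v"]
    unfolding real_eigenvalues_def f_def by blast+
  have orth: "f l1 \<bullet> f l2 = 0"
    if "l1 \<in> real_eigenvalues M" "l2 \<in> real_eigenvalues M" "l1 \<noteq> l2" for l1 l2
  proof -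
    have "l2 * (f l1 \<bullet> f l2) = (M *v f l1) \<bullet> f l2"
      using f[OF that(2)] sym_mat_inner_commute[OF assms, of "f l1" "f l2"] by simp
    also have "\<dots> = l1 * (f l1 \<bullet> f l2)"
      using f[OF that(1)] by simp
    finally show ?thesis
      using that(3) by simp
  qed
  have "inj_on f (real_eigenvalues M)"
    by (rule inj_onI) (use orth f in fastforce)
  moreover have "independent (f ` real_eigenvalues M)"
    using orth f by (intro pairwise_orthogonal_independent) (auto simp: pairwise_def orthogonal_def)
  ultimately show ?thesis
    using independent_imp_finite finite_image_iff by blast
qed

lemma quadratic_form_attains_min_on_sphere:
  fixes M :: "real^'n^'n"
  shows "\<exists>x. x \<bullet> x = 1 \<and> (\<forall>y. (x \<bullet> (M *v x)) * (y \<bullet> y) \<le> y \<bullet> (M *v y))"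
proof -
  define q where "q y = y \<bullet> (M *v y)" for y :: "real^'n"
  have "continuous_on (sphere 0 1) q"
    unfolding q_def by (intro continuous_intros linear_continuous_on matrix_vector_mul_linear_gen)
  moreover obtain i :: 'n where True by simp
  then have "axis i 1 \<in> sphere (0::real^'n) 1" by simp
  ultimately obtain x where x: "x \<in> sphere 0 1" "\<And>y. y \<in> sphere 0 1 \<Longrightarrow> q x \<le> q y"
    using continuous_attains_inf[OF compact_sphere] by blast
  have "q x * (y \<bullet> y) \<le> q y" for y
  proof (cases "y = 0")
    case False
    define c where "c = 1 / norm y"
    have "q x \<le> q (c *\<^sub>R y)"
      using x False by (simp add: c_def)
    also have "\<dots> = c\<^sup>2 * q y"
      by (simp add: q_def matrix_vector_mult_scaleR power2_eq_square)
    finally show ?thesis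
      using False by (simp add: c_def dot_square_norm field_simps)
  qed (simp add: q_def)
  moreover have "x \<bullet> x = 1"
    using x(1) by (simp add: dot_square_norm)
  ultimately show ?thesis
    unfolding q_def by blast
qed

text \<open>Perturbing \<open>x\<close> in the direction \<open>z = M x - m x\<close> would otherwise violate the lower
  bound to first order.\<close>
lemma sym_mat_rayleigh_minimizer_eigenvector:
  fixes M :: "real^'n^'n"
  assumes sym: "sym_mat M"
    and lower: "\<And>y. m * (y \<bullet> y) \<le> y \<bullet> (M *v y)"
    and attained: "x \<bullet> (M *v x) = m * (x \<bullet> x)"
  shows "M *v x = m *\<^sub>R x"
proof -
  define z where "z = M *v x - m *\<^sub>R x"
  define qn where "qn y = y \<bullet> (M *v y) - m * (y \<bullet> y)" for y
  have qn_nonneg: "qn y \<ge> 0" for y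
    using lower[of y] by (simp add: qn_def)
  have expand: "qn (x + t *\<^sub>R z) = 2 * t * (z \<bullet> z) + t\<^sup>2 * qn z" for t
  proof -
    have "x \<bullet> (M *v z) = z \<bullet> (M *v x)"
      using sym_mat_inner_commute[OF sym, of x z] by (simp add: inner_commute)
    then show ?thesis
      using attained unfolding qn_def z_def
      by (simp add: matrix_vector_right_distrib matrix_vector_mult_scaleR inner_add_left inner_add_right
          inner_diff_right inner_diff_left algebra_simps power2_eq_square
          inner_commute[of x z] inner_commute[of "M *v x" x])
  qed
  define a where "a = z \<bullet> z"
  define c where "c = qn z"
  have c: "c \<ge> 0"
    using qn_nonneg by (simp add: c_def)
  have "0 \<le> qn (x + (- a / (c + 1)) *\<^sub>R z)"
    by (rule qn_nonneg)
  also have "\<dots> = - a\<^sup>2 * (c + 2) / (c + 1)\<^sup>2"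
    unfolding expand a_def[symmetric] c_def[symmetric] using c
    by (simp add: divide_simps power2_eq_square) algebra
  finally have "a\<^sup>2 * (c + 2) \<le> 0"
    using c by (simp add: divide_le_0_iff)
  then have "a = 0"
    using c by (simp add: mult_le_0_iff)
  then show ?thesis
    by (simp add: a_def z_def)
qed

lemma eigenvalue_ge_rayleigh_lower_bound:
  assumes "l \<in> real_eigenvalues M" and "\<And>y. m * (y \<bullet> y) \<le> y \<bullet> ((M::real^'n^'n) *v y)"
  shows "m \<le> l"
proof -
  obtain v where v: "v \<noteq> 0" "M *v v = l *\<^sub>R v"
    using assms(1) unfolding real_eigenvalues_def by blast
  then show ?thesis
    using assms(2)[of v] by simp
qed

lemma
  fixes M :: "real^'n^'n"
  assumes "sym_mat M"
  shows lambda_min_in_real_eigenvalues: "lambda_min M \<in> real_eigenvalues M"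
    and lambda_min_le_rayleigh: "lambda_min M * (y \<bullet> y) \<le> y \<bullet> (M *v y)"
proof -
  obtain x where x: "x \<bullet> x = 1" and lower: "\<And>y. (x \<bullet> (M *v x)) * (y \<bullet> y) \<le> y \<bullet> (M *v y)"
    using quadratic_form_attains_min_on_sphere[of M] by blast
  define m where "m = x \<bullet> (M *v x)"
  have "M *v x = m *\<^sub>R x"
    using x lower by (intro sym_mat_rayleigh_minimizer_eigenvector[OF assms]) (simp_all add: m_def)
  moreover have "x \<noteq> 0"
    using x by auto
  ultimately have m: "m \<in> real_eigenvalues M"
    unfolding real_eigenvalues_def by blast
  have "lambda_min M = m"
    unfolding lambda_min_def using finite_real_eigenvalues[OF assms] m lower
    by (intro Min_eqI) (auto simp: m_def intro: eigenvalue_ge_rayleigh_lower_bound)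
  then show "lambda_min M \<in> real_eigenvalues M" "lambda_min M * (y \<bullet> y) \<le> y \<bullet> (M *v y)"
    using m lower by (simp_all add: m_def)
qed

lemma
  fixes M :: "real^'n^'n"
  assumes "sym_mat M"
  shows lambda_max_in_real_eigenvalues: "lambda_max M \<in> real_eigenvalues M"
    and rayleigh_le_lambda_max: "y \<bullet> (M *v y) \<le> lambda_max M * (y \<bullet> y)"
proof -
  have sym: "sym_mat (- M)"
    by (rule sym_mat_uminus[OF assms])
  have "real_eigenvalues M \<noteq> {}"
    using lambda_min_in_real_eigenvalues[OF sym] by (auto simp: real_eigenvalues_uminus)
  then have "- Min (uminus ` real_eigenvalues M) = Max (uminus ` uminus ` real_eigenvalues M)"
    using finite_real_eigenvalues[OF assms] by (intro minus_Min_eq_Max) auto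
  then have "- Min (uminus ` real_eigenvalues M) = Max (real_eigenvalues M)"
    by (simp only: image_image minus_minus image_ident)
  then have "lambda_max M = - lambda_min (- M)"
    by (simp only: lambda_max_def lambda_min_def real_eigenvalues_uminus)
  then show "lambda_max M \<in> real_eigenvalues M" "y \<bullet> (M *v y) \<le> lambda_max M * (y \<bullet> y)"
    using lambda_min_in_real_eigenvalues[OF sym] lambda_min_le_rayleigh[OF sym, of y]
    by (auto simp: real_eigenvalues_uminus matrix_vector_mult_uminus)
qed

lemma pos_def_imp_sym_mat: "pos_def M \<Longrightarrow> sym_mat M"
  by (simp add: pos_def_def)

lemma pos_def_quadratic_form_nonneg: "pos_def M \<Longrightarrow> 0 \<le> x \<bullet> ((M::real^'n^'n) *v x)"
  unfolding pos_def_def by (cases "x = 0") (auto intro: less_imp_le)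

lemma pos_def_eigenvalue_pos:
  assumes "pos_def M" "l \<in> real_eigenvalues (M::real^'n^'n)"
  shows "l > 0"
proof -
  obtain v where v: "v \<noteq> 0" "M *v v = l *\<^sub>R v"
    using assms(2) unfolding real_eigenvalues_def by blast
  then have "l * (v \<bullet> v) > 0"
    using assms(1) unfolding pos_def_def by auto
  moreover have "v \<bullet> v > 0"
    using v by simp
  ultimately show ?thesis
    by (simp add: zero_less_mult_iff)
qed

lemma pos_def_matrix_inv_right:
  assumes "pos_def (K::real^'n^'n)"
  shows "K *v (matrix_inv K *v w) = w"
proof -
  have "K *v x = 0 \<Longrightarrow> x = 0" for x
    using assms unfolding pos_def_def by force
  then have "invertible K"
    by (simp add: matrix_left_invertible_ker invertible_left_inverse)
  then have "K ** matrix_inv K = mat 1"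
    unfolding invertible_def matrix_inv_def by (rule someI_ex[THEN conjunct1])
  then show ?thesis
    by (simp add: matrix_vector_mul_assoc)
qed

lemma outer_mult_vector: "outer v w *v y = (w \<bullet> y) *\<^sub>R (v::real^'n)"
  by (simp add: vec_eq_iff outer_def matrix_vector_mult_def inner_vec_def sum_distrib_left mult_ac)

lemma quadratic_form_add_outer:
  "y \<bullet> ((Q + c *\<^sub>R outer v v) *v y) = y \<bullet> (Q *v y) + c * (v \<bullet> y)\<^sup>2"
  by (simp add: matrix_vector_mult_add_rdistrib outer_mult_vector inner_add_right power2_eq_square
      inner_commute flip: scaleR_matrix_vector_assoc)

lemma sym_mat_add_outer:
  assumes "sym_mat (Q::real^'n^'n)"
  shows "sym_mat (Q + c *\<^sub>R outer v v)"
proof -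
  have "Q $ j $ i = Q $ i $ j" for i j
    using arg_cong[OF assms[unfolded sym_mat_def], of "\<lambda>M. M $ i $ j"] by (simp add: transpose_def)
  then show ?thesis
    unfolding sym_mat_def by (simp add: vec_eq_iff transpose_def outer_def mult.commute)
qed

lemma pos_def_add_outer:
  assumes "pos_def Q" and "c \<ge> 0"
  shows "pos_def (Q + c *\<^sub>R outer v v)"
  unfolding pos_def_def
proof (intro conjI allI impI)
  show "sym_mat (Q + c *\<^sub>R outer v v)"
    using assms(1) by (simp add: pos_def_def sym_mat_add_outer)
  fix y :: "real^'a" assume "y \<noteq> 0"
  then have "y \<bullet> (Q *v y) > 0"
    using assms(1) unfolding pos_def_def by blast
  then show "y \<bullet> ((Q + c *\<^sub>R outer v v) *v y) > 0"
    using assms(2) by (simp add: quadratic_form_add_outer add_pos_nonneg)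
qed

lemma
  assumes "pos_def Q" and "c \<ge> 0"
  shows gfun_pos: "gfun c Q v > 0"
    and gfun_le_quadratic_form: "gfun c Q v * (y \<bullet> y) \<le> y \<bullet> (Q *v y) + c * (v \<bullet> y)\<^sup>2"
proof -
  have pd: "pos_def (Q + c *\<^sub>R outer v v)"
    by (rule pos_def_add_outer[OF assms])
  show "gfun c Q v > 0"
    unfolding gfun_def
    using pos_def_eigenvalue_pos[OF pd lambda_min_in_real_eigenvalues[OF pos_def_imp_sym_mat[OF pd]]] .
  show "gfun c Q v * (y \<bullet> y) \<le> y \<bullet> (Q *v y) + c * (v \<bullet> y)\<^sup>2"
    using lambda_min_le_rayleigh[OF pos_def_imp_sym_mat[OF pd]]
    by (simp add: gfun_def quadratic_form_add_outer)
qed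

lemma lyapunov_quadratic_form:
  assumes "sym_mat P" and "Q = - (transpose A ** P + P ** A)"
  shows "x \<bullet> (Q *v x) = - 2 * (x \<bullet> (P *v (A *v (x::real^'n))))"
proof -
  have "x \<bullet> (transpose A *v (P *v x)) = (x v* transpose A) \<bullet> (P *v x)"
    by (rule dot_lmul_matrix[symmetric])
  also have "x v* transpose A = A *v x"
    by (metis transpose_matrix_vector transpose_transpose)
  also have "(A *v x) \<bullet> (P *v x) = x \<bullet> (P *v (A *v x))"
    using sym_mat_inner_commute[OF assms(1), of x "A *v x"] by (simp add: inner_commute)
  finally have "x \<bullet> (transpose A *v (P *v x)) = x \<bullet> (P *v (A *v x))" .
  moreover have "Q *v x = - (transpose A *v (P *v x) + P *v (A *v x))"
    unfolding assms(2) matrix_vector_mult_uminus matrix_vector_mult_add_rdistrib matrix_vector_mul_assoc ..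
  ultimately have "x \<bullet> (Q *v x) = - (x \<bullet> (P *v (A *v x)) + x \<bullet> (P *v (A *v x)))"
    by (simp only: inner_minus_right inner_add_right)
  then show ?thesis
    by simp
qed

text \<open>Expand \<open>(a y - K\<inverse> W)\<^sup>T K (a y - K\<inverse> W) \<ge> 0\<close>.\<close>
lemma inner_le_pos_def_quadratic_form:
  assumes K: "pos_def K" and a: "a > 0"
  shows "2 * (W \<bullet> y) \<le> a * (y \<bullet> (K *v y)) + (W \<bullet> (matrix_inv K *v W)) / a"
proof -
  define y0 where "y0 = matrix_inv K *v W"
  have Ky0: "K *v y0 = W"
    unfolding y0_def by (rule pos_def_matrix_inv_right[OF K])
  have "y \<bullet> (K *v y0) = W \<bullet> y" "y0 \<bullet> (K *v y0) = W \<bullet> y0"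
    using Ky0 by (simp_all add: inner_commute)
  moreover have "y0 \<bullet> (K *v y) = W \<bullet> y"
    using sym_mat_inner_commute[OF pos_def_imp_sym_mat[OF K], of y0 y] Ky0 by (simp add: inner_commute)
  ultimately have "(a *\<^sub>R y - y0) \<bullet> (K *v (a *\<^sub>R y - y0))
      = a * (a * (y \<bullet> (K *v y)) - 2 * (W \<bullet> y) + (W \<bullet> y0) / a)"
    using a by (simp add: matrix_vector_mult_diff_distrib matrix_vector_mult_scaleR inner_diff_left
        inner_diff_right field_simps)
  then have "0 \<le> a * (a * (y \<bullet> (K *v y)) - 2 * (W \<bullet> y) + (W \<bullet> y0) / a)"
    using pos_def_quadratic_form_nonneg[OF K] by metis
  then show ?thesis
    using a by (simp add: zero_le_mult_iff y0_def)
qed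

lemma weighted_young_inequality:
  fixes a s x :: real
  assumes "a > 0"
  shows "2 * s * x \<le> a * s\<^sup>2 + x\<^sup>2 / a"
proof -
  have "0 \<le> (a * s - x)\<^sup>2 / a"
    using assms by simp
  also have "\<dots> = a * s\<^sup>2 - 2 * s * x + x\<^sup>2 / a"
    using assms by (simp add: field_simps power2_eq_square)
  finally show ?thesis
    by simp
qed

lemma mvt_atLeast:
  fixes V V' :: "real \<Rightarrow> real"
  assumes "\<And>t. t \<ge> c \<Longrightarrow> (V has_field_derivative V' t) (at t within {c..})"
    and "c \<le> a" "a < b"
  obtains x where "a < x" "x < b" "V b - V a = V' x * (b - a)"
proof -
  have "\<exists>x\<in>{a<..<b}. V b - V a = (\<lambda>h. V' x * h) (b - a)"
  proof (rule mvt_simple[OF assms(3)])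
    fix x assume "a \<le> x" "x \<le> b"
    then have "(V has_field_derivative V' x) (at x within {c..})"
      using assms by simp
    then have "(V has_field_derivative V' x) (at x within {a..b})"
      by (rule has_field_derivative_subset) (use assms in auto)
    then show "(V has_derivative (\<lambda>h. V' x * h)) (at x within {a..b})"
      by (simp add: has_field_derivative_def)
  qed
  then show ?thesis
    using that by auto
qed

lemma sublevel_reached:
  fixes V V' :: "real \<Rightarrow> real"
  assumes der: "\<And>t. t \<ge> 0 \<Longrightarrow> (V has_field_derivative V' t) (at t within {0..})"
    and dec: "\<And>t. t \<ge> 0 \<Longrightarrow> V t > c \<Longrightarrow> V' t \<le> - \<mu>" and "\<mu> > 0"
  shows "\<exists>t\<ge>0. V t \<le> c"
proof (rule ccontr)
  assume "\<not> ?thesis"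
  then have above: "V t > c" if "t \<ge> 0" for t
    using that by auto
  define T where "T = \<bar>V 0 - c\<bar> / \<mu> + 1"
  have T: "T > 0"
    unfolding T_def using \<open>\<mu> > 0\<close> by (simp add: add_nonneg_pos)
  obtain x where x: "0 < x" "V T - V 0 = V' x * T"
    using mvt_atLeast[OF der order.refl T] by auto
  have "V' x * T \<le> - \<mu> * T"
    using dec[of x] above[of x] x T by (intro mult_right_mono) auto
  also have "\<dots> = - \<bar>V 0 - c\<bar> - \<mu>"
    unfolding T_def using \<open>\<mu> > 0\<close> by (simp add: field_simps)
  finally have "V T < c"
    using x(2) \<open>\<mu> > 0\<close> by linarith
  then show False
    using above[of T] T by simp
qed

text \<open>At the last time \<open>s \<le> t\<^sub>1\<close> with \<open>V s \<le> c\<close>, the mean value theorem on \<open>[s, t\<^sub>1]\<close>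
  gives \<open>V t\<^sub>1 \<le> V s\<close>.\<close>
lemma sublevel_forward_invariant:
  fixes V V' :: "real \<Rightarrow> real"
  assumes der: "\<And>t. t \<ge> 0 \<Longrightarrow> (V has_field_derivative V' t) (at t within {0..})"
    and dec: "\<And>t. t \<ge> 0 \<Longrightarrow> V t > c \<Longrightarrow> V' t \<le> 0"
    and t0: "t0 \<ge> 0" "V t0 \<le> c" and t1: "t0 \<le> t1"
  shows "V t1 \<le> c"
proof (rule ccontr)
  assume bad: "\<not> V t1 \<le> c"
  have "continuous_on {0..} V"
    unfolding continuous_on_eq_continuous_within using der DERIV_continuous by (metis atLeast_iff)
  then have "closed ({t0..t1} \<inter> V -` {..c})"
    using t0 by (intro continuous_closed_preimage) (auto intro: continuous_on_subset)
  moreover have "t0 \<in> {t0..t1} \<inter> V -` {..c}"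
    using t0 t1 by auto
  ultimately have s: "Sup ({t0..t1} \<inter> V -` {..c}) \<in> {t0..t1} \<inter> V -` {..c}" (is "?s \<in> ?S")
    by (intro closed_contains_Sup) (auto intro: bdd_aboveI[of _ t1])
  have "?s < t1"
    using s bad by (cases "?s = t1") auto
  moreover have "0 \<le> ?s"
    using s t0 by auto
  ultimately obtain x where x: "?s < x" "x < t1" "V t1 - V ?s = V' x * (t1 - ?s)"
    using mvt_atLeast[OF der] by metis
  have "\<not> x \<in> ?S"
    using x(1) cSup_upper[of x ?S] by (auto intro: bdd_aboveI[of _ t1])
  then have "V x > c"
    using x s by auto
  then have "V' x * (t1 - ?s) \<le> 0"
    using dec[of x] x s t0 by (auto intro: mult_nonpos_nonneg)
  then show False
    using x(3) s bad by auto
qed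

lemma has_field_derivative_quadratic_form:
  assumes "sym_mat P" and "(e has_vector_derivative e') (at t within S)"
  shows "((\<lambda>t. e t \<bullet> (P *v e t)) has_field_derivative 2 * (e t \<bullet> (P *v e'))) (at t within S)"
proof -
  have e: "(e has_derivative (\<lambda>h. h *\<^sub>R e')) (at t within S)"
    using assms(2) unfolding has_vector_derivative_def .
  have Pe: "((\<lambda>s. P *v e s) has_derivative (\<lambda>h. P *v (h *\<^sub>R e'))) (at t within S)"
    by (rule bounded_linear.has_derivative[OF matrix_vector_mul_bounded_linear e])
  have "e' \<bullet> (P *v e t) = e t \<bullet> (P *v e')"
    using sym_mat_inner_commute[OF assms(1), of "e t" e'] by (simp add: inner_commute)
  then have "(\<lambda>h. e t \<bullet> (P *v (h *\<^sub>R e')) + (h *\<^sub>R e') \<bullet> (P *v e t)) = (*) (2 * (e t \<bullet> (P *v e')))"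
    by (auto simp: matrix_vector_mult_scaleR algebra_simps)
  then show ?thesis
    using has_derivative_inner[OF e Pe] by (simp add: has_field_derivative_def)
qed

lemma ultimately_bounded_by_quadratic_lyapunov:
  fixes e :: "real \<Rightarrow> 'a::real_normed_vector" and V V' :: "real \<Rightarrow> real"
  assumes der: "\<And>t. t \<ge> 0 \<Longrightarrow> (V has_field_derivative V' t) (at t within {0..})"
    and lower: "\<And>t. lmin * (norm (e t))\<^sup>2 \<le> V t"
    and upper: "\<And>t. V t \<le> lmax * (norm (e t))\<^sup>2"
    and decay: "\<And>t. t \<ge> 0 \<Longrightarrow> V' t \<le> - g * (norm (e t))\<^sup>2 + D"
    and pos: "lmin > 0" "lmax > 0" "g > 0" "\<mu> > 0"
  shows "\<exists>T\<ge>0. \<forall>t\<ge>T. norm (e t) \<le> sqrt (lmax / (g * lmin)) * sqrt (D + \<mu>)"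
proof -
  define c where "c = lmax * (D + \<mu>) / g"
  have dec: "V' t \<le> - \<mu>" if "t \<ge> 0" "V t > c" for t
  proof -
    have "lmax * ((D + \<mu>) / g) < lmax * (norm (e t))\<^sup>2"
      using upper[of t] that(2) by (simp add: c_def)
    then have "D + \<mu> < g * (norm (e t))\<^sup>2"
      using pos by (simp add: divide_less_eq mult.commute)
    then show ?thesis
      using decay[OF that(1)] by linarith
  qed
  obtain T where T: "T \<ge> 0" "V T \<le> c"
    using sublevel_reached[OF der dec \<open>\<mu> > 0\<close>] by blast
  have "norm (e t) \<le> sqrt (lmax / (g * lmin)) * sqrt (D + \<mu>)" if "t \<ge> T" for t
  proof -
    have "V t \<le> c"
      using sublevel_forward_invariant[OF der _ T] dec \<open>\<mu> > 0\<close> that by force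
    then have "lmin * (norm (e t))\<^sup>2 \<le> c"
      using lower[of t] by linarith
    then have "(norm (e t))\<^sup>2 \<le> c / lmin"
      using pos by (simp add: le_divide_eq mult.commute)
    also have "c / lmin = lmax / (g * lmin) * (D + \<mu>)"
      by (simp add: c_def)
    finally have "sqrt ((norm (e t))\<^sup>2) \<le> sqrt (lmax / (g * lmin) * (D + \<mu>))"
      by (rule real_sqrt_le_mono)
    then show ?thesis
      by (simp only: real_sqrt_mult real_sqrt_abs abs_norm_cancel)
  qed
  then show ?thesis
    using T(1) by blast
qed

lemma closed_loop_lyapunov_derivative_le:
  fixes A P Q :: "real^'n^'n" and B x :: "real^'n" and Kb :: "real^'m^'m" and W z :: "real^'m"
  assumes P: "sym_mat P" and Q: "pos_def Q" and lyap: "Q = - (transpose A ** P + P ** A)"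
    and Kb: "pos_def Kb" and \<alpha>: "\<alpha> > 0" and \<gamma>: "0 \<le> \<gamma>" "\<gamma> < 1"
    and b: "0 < b" "b \<le> z \<bullet> (Kb *v z)" and \<eta>: "\<bar>\<eta>\<bar> \<le> \<eta>s"
  shows "2 * (x \<bullet> (P *v (A *v x + (- (\<alpha> * (B \<bullet> (P *v x)) * (z \<bullet> (Kb *v z))) + W \<bullet> z + \<eta>) *\<^sub>R B)))
    \<le> - gfun (\<alpha> * b * \<gamma>) Q (P *v B) * (norm x)\<^sup>2
       + (W \<bullet> (matrix_inv Kb *v W) + \<eta>s\<^sup>2 / (b * (1 - \<gamma>))) / \<alpha>"
proof -
  define s where "s = B \<bullet> (P *v x)"
  define k where "k = z \<bullet> (Kb *v z)"
  define g where "g = gfun (\<alpha> * b * \<gamma>) Q (P *v B)"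
  have k: "k > 0"
    using b by (simp add: k_def)
  have "(P *v B) \<bullet> x = s"
    using sym_mat_inner_commute[OF P, of x B] by (simp add: s_def inner_commute)
  then have "g * (norm x)\<^sup>2 \<le> x \<bullet> (Q *v x) + \<alpha> * b * \<gamma> * s\<^sup>2"
    using gfun_le_quadratic_form[OF Q, of "\<alpha> * b * \<gamma>" "P *v B" x] \<alpha> \<gamma> b
    by (simp add: g_def power2_norm_eq_inner)
  moreover have "\<alpha> * b * \<gamma> * s\<^sup>2 \<le> \<alpha> * \<gamma> * k * s\<^sup>2"
  proof -
    have "b * \<gamma> \<le> k * \<gamma>"
      using b \<gamma> by (intro mult_right_mono) (simp_all add: k_def)
    then show ?thesis
      using mult_left_mono[of "b * \<gamma>" "k * \<gamma>" "\<alpha> * s\<^sup>2"] \<alpha> by (simp add: mult_ac)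
  qed
  moreover have "2 * s * (W \<bullet> z) \<le> \<alpha> * k * s\<^sup>2 + W \<bullet> (matrix_inv Kb *v W) / \<alpha>"
    using inner_le_pos_def_quadratic_form[OF Kb \<alpha>, of W "s *\<^sub>R z"]
    by (simp add: k_def matrix_vector_mult_scaleR power2_eq_square mult_ac)
  moreover have "2 * s * \<eta> \<le> \<alpha> * k * s\<^sup>2 - \<alpha> * \<gamma> * k * s\<^sup>2 + \<eta>s\<^sup>2 / (b * (1 - \<gamma>)) / \<alpha>"
  proof -
    have "\<eta>\<^sup>2 \<le> \<eta>s\<^sup>2"
      using \<eta> by (metis abs_ge_zero power2_abs power_mono)
    then have "\<eta>\<^sup>2 / (\<alpha> * (1 - \<gamma>) * k) \<le> \<eta>s\<^sup>2 / (\<alpha> * (1 - \<gamma>) * b)"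
      using \<alpha> \<gamma> b by (intro frac_le) (auto simp: k_def)
    then show ?thesis
      using weighted_young_inequality[of "\<alpha> * (1 - \<gamma>) * k" s \<eta>] \<alpha> \<gamma> k by (simp add: algebra_simps)
  qed
  moreover have "2 * (x \<bullet> (P *v (A *v x + (- (\<alpha> * s * k) + W \<bullet> z + \<eta>) *\<^sub>R B)))
      = - (x \<bullet> (Q *v x)) - 2 * (\<alpha> * k * s\<^sup>2) + 2 * s * (W \<bullet> z) + 2 * s * \<eta>"
    using lyapunov_quadratic_form[OF P lyap, of x] \<open>(P *v B) \<bullet> x = s\<close>
    by (simp add: matrix_vector_right_distrib matrix_vector_mult_scaleR inner_add_right
        inner_commute[of x "P *v B"] algebra_simps power2_eq_square)
  ultimately show ?thesis
    unfolding s_def[symmetric] k_def[symmetric] g_def[symmetric] add_divide_distrib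
    by linarith
qed

theorem mainTheorem4:
  fixes A P Q :: "real^'n^'n" and B :: "real^'n"
    and Kb :: "real^'m^'m" and W :: "real^'m"
    and \<beta> :: "real^'n \<Rightarrow> real^'m" and \<alpha>\<^sub>\<beta> :: "real \<Rightarrow> real"
    and \<eta> :: "real \<Rightarrow> real" and \<eta>s \<alpha> \<gamma> \<mu> :: real
    and e :: "real \<Rightarrow> real^'n" and u :: "real \<Rightarrow> real" and What :: "real \<Rightarrow> real^'m"
  assumes hurwitz: "hurwitz A"
    and ass1_mono: "mono_on {0..} \<alpha>\<^sub>\<beta>" and ass1_nonneg: "\<forall>r\<ge>0. \<alpha>\<^sub>\<beta> r \<ge> 0"
    and ass1: "\<forall>x. norm (\<beta> x) \<le> \<alpha>\<^sub>\<beta> (norm x)"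
    and alpha_pos: "\<alpha> > 0" and Kb_pd: "pos_def Kb"
    and P_pd: "pos_def P" and Q_pd: "pos_def Q"
    and lyap: "Q = - (transpose A ** P + P ** A)"
    and b_pos: "(INF x. \<beta> x \<bullet> (Kb *v \<beta> x)) > 0"
    and eta_bd: "\<forall>t\<ge>0. \<bar>\<eta> t\<bar> \<le> \<eta>s"
    and gamma: "0 \<le> \<gamma>" "\<gamma> < 1" and mu: "\<mu> > 0"
    and update: "\<forall>t\<ge>0. What t = (B \<bullet> (P *v e t)) *\<^sub>R ((\<alpha> *\<^sub>R Kb) *v \<beta> (e t))"
    and control: "\<forall>t\<ge>0. u t = - (What t \<bullet> \<beta> (e t))"
    and sol: "\<forall>t\<ge>0. (e has_vector_derivative
                 (A *v e t + (u t + W \<bullet> \<beta> (e t) + \<eta> t) *\<^sub>R B)) (at t within {0..})"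
  shows "let b = (INF x. \<beta> x \<bullet> (Kb *v \<beta> x));
             r = sqrt (lambda_max P / (gfun (\<alpha> * b * \<gamma>) Q (P *v B) * lambda_min P))
               * sqrt ((W \<bullet> (matrix_inv Kb *v W) + \<eta>s\<^sup>2 / (b * (1 - \<gamma>))) / \<alpha> + \<mu>)
         in \<exists>Te\<ge>0. \<forall>t\<ge>Te. norm (e t) \<le> r"
proof -
  define b where "b = (INF x. \<beta> x \<bullet> (Kb *v \<beta> x))"
  have b_le: "b \<le> \<beta> x \<bullet> (Kb *v \<beta> x)" for x
    unfolding b_def using pos_def_quadratic_form_nonneg[OF Kb_pd]
    by (intro cINF_lower bdd_belowI[of _ 0]) auto
  have P: "sym_mat P"
    by (rule pos_def_imp_sym_mat[OF P_pd])
  have u: "u t = - (\<alpha> * (B \<bullet> (P *v e t)) * (\<beta> (e t) \<bullet> (Kb *v \<beta> (e t))))" if "t \<ge> 0" for t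
    using update control that by (simp add: inner_commute flip: scaleR_matrix_vector_assoc)
  define V' where "V' t = 2 * (e t \<bullet> (P *v (A *v e t + (u t + W \<bullet> \<beta> (e t) + \<eta> t) *\<^sub>R B)))" for t
  have der: "((\<lambda>t. e t \<bullet> (P *v e t)) has_field_derivative V' t) (at t within {0..})" if "t \<ge> 0" for t
    unfolding V'_def by (rule has_field_derivative_quadratic_form[OF P sol[rule_format, OF that]])
  have decay: "V' t \<le> - gfun (\<alpha> * b * \<gamma>) Q (P *v B) * (norm (e t))\<^sup>2
      + (W \<bullet> (matrix_inv Kb *v W) + \<eta>s\<^sup>2 / (b * (1 - \<gamma>))) / \<alpha>" if "t \<ge> 0" for t
    unfolding V'_def u[OF that]
    by (rule closed_loop_lyapunov_derivative_le[OF P Q_pd lyap Kb_pd alpha_pos gamma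
          b_pos[folded b_def] b_le eta_bd[rule_format, OF that]])
  have lower: "lambda_min P * (norm (e t))\<^sup>2 \<le> e t \<bullet> (P *v e t)" for t
    using lambda_min_le_rayleigh[OF P] by (simp add: power2_norm_eq_inner)
  have upper: "e t \<bullet> (P *v e t) \<le> lambda_max P * (norm (e t))\<^sup>2" for t
    using rayleigh_le_lambda_max[OF P] by (simp add: power2_norm_eq_inner)
  have eig_pos: "lambda_min P > 0" "lambda_max P > 0"
    using pos_def_eigenvalue_pos[OF P_pd] lambda_min_in_real_eigenvalues[OF P]
      lambda_max_in_real_eigenvalues[OF P] by auto
  have g_pos: "gfun (\<alpha> * b * \<gamma>) Q (P *v B) > 0"
    using gfun_pos[OF Q_pd] alpha_pos b_pos gamma by (simp add: b_def)
  show ?thesis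
    unfolding Let_def b_def[symmetric]
    by (rule ultimately_bounded_by_quadratic_lyapunov[OF der lower upper decay eig_pos g_pos mu])
qed

end
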